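(* Let $N\ge1$, $R>0$, $m>1$ with $N>m$, $p>1$, $\gamma\in(0,m-1)$, $\alpha,\beta\in\mathbb R$ with $N+\alpha-m>0$, $\beta-\alpha+1>0$, and $m-1<p<m^*_{\alpha,\beta}-1$ where $m^*_{\alpha,\beta}=\frac{m(N+\beta)}{N+\alpha-m}$. Let $g:[0,\infty)\to[0,\infty)$ be continuous, nondecreasing with $\lim_{v\to\infty}g(v)/v=1$, and let $a:[0,\infty)\to(0,\infty)$ be continuous with $c_1\le a\le c_2$ for constants $0<c_1\le c_2$. Fix $q>p$ and define $h(t)=t^{q-p}$ for $t\ge1$, $h(t)=1$ for $0\le t\le1$. For $k\in\mathbb N$ let $g_k(s)=g(\min\{k,s\})$ for $s\ge0$. Then for each $k\in\mathbb N$ there is a positive constant $C_k$ depending only on $k$ such that, for every $\xi\ge0$, every positive solution $v$ of $$-\Big(\frac{r^{N+\alpha-1}|v'(r)|^{m-2}v'(r)}{(a(r)+g_k(v(r)))^\gamma}\Big)'=r^{N+\beta-1}\Big(v^p(r)+\frac{\xi}{h(\|v\|_\infty)}\Big),\ 0<r<R,\qquad v'(0)=0,\ v(R)=0,$$ satisfies $\|v\|_\infty\le C_k$.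
   Context: $\|v\|_\infty=\sup_{[0,R]}|v|$. A positive solution is a function $v$, positive on $[0,R)$, with $v\in C^1[0,R)\cap C[0,R]$, whose flux $r^{N+\alpha-1}|v'|^{m-2}v'(a+g_k(v))^{-\gamma}$ is $C^1$ on $(0,R)$, satisfying the equation and boundary conditions. *)

theory Defs
  imports "HOL-Analysis.Analysis"
begin

definition gtrunc :: "(real \<Rightarrow> real) \<Rightarrow> real \<Rightarrow> real \<Rightarrow> real" where
  "gtrunc g k s = g (min k s)"

definition hfun :: "real \<Rightarrow> real \<Rightarrow> real \<Rightarrow> real" where
  "hfun q p t = (if t \<ge> 1 then t powr (q - p) else 1)"

definition supnorm :: "real \<Rightarrow> (real \<Rightarrow> real) \<Rightarrow> real" where
  "supnorm R v = Sup ((\<lambda>r. \<bar>v r\<bar>) ` {0..R})"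

definition positive_solution ::
  "nat \<Rightarrow> real \<Rightarrow> real \<Rightarrow> real \<Rightarrow> real \<Rightarrow> real \<Rightarrow> real \<Rightarrow> real \<Rightarrow>
   (real \<Rightarrow> real) \<Rightarrow> (real \<Rightarrow> real) \<Rightarrow> real \<Rightarrow> real \<Rightarrow> (real \<Rightarrow> real) \<Rightarrow> bool" where
  "positive_solution N R m p \<gamma> \<alpha> \<beta> q a g k \<xi> v \<longleftrightarrow>
     (\<forall>r\<in>{0..<R}. v r > 0) \<and>
     continuous_on {0..R} v \<and>
     (\<exists>vd F'.
        (\<forall>r\<in>{0..<R}. (v has_real_derivative vd r) (at r within {0..<R})) \<and>
        continuous_on {0..<R} vd \<and>
        (let F = (\<lambda>r. r powr (real N + \<alpha> - 1) * (\<bar>vd r\<bar> powr (m - 2) * vd r)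
                        / (a r + gtrunc g k (v r)) powr \<gamma>) in
          (\<forall>r\<in>{0<..<R}. (F has_real_derivative F' r) (at r)) \<and>
          continuous_on {0<..<R} F' \<and>
          (\<forall>r\<in>{0<..<R}. - F' r = r powr (real N + \<beta> - 1) *
               (v r powr p + \<xi> / hfun q p (supnorm R v)))) \<and>
        vd 0 = 0) \<and>
     v R = 0"

end

theory Submission
  imports Defs
begin

text \<open>
  For fixed k the coefficient (a + g_k(v))^\<gamma> stays between c1^\<gamma> and (c2 + g(k))^\<gamma>, and the
  bound follows from a quantitative blow-up argument. A positive solution is radially decreasing,
  so M = \<parallel>v\<parallel> = v(0). If M is large, the rescaling w(x) = v(\<lambda>x)/M with
  \<lambda>^(\<beta>-\<alpha>+m) M^(p-m+1) (1 + \<rho>) = 1 solves a normalized problem on a long interval [0, R/\<lambda>), and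
  near the origin, where v > k, its coefficient is close to the constant D0 = (a(0) + g(k))^\<gamma>.
  Comparison arguments show that w stays near 1 close to 0, is bounded below on [0, K], decays
  like x^(-\<kappa>), and that the constant part 1 - t of the source is small. A Pohozaev function
  of the frozen problem has derivative at least A0 x^(b-1) w^(p+1) up to an error controlled by
  \<bar>D/D0 - 1\<bar>, where A0 > 0 is exactly the subcriticality of p; so it is bounded below by a
  positive constant at K, while the decay of w forces it to be small at K once K is large.
\<close>

lemma le_by_nonneg_deriv:
  fixes f f' :: "real \<Rightarrow> real"
  assumes "a \<le> b" "continuous_on {a..b} f"
    and "\<And>x. a < x \<Longrightarrow> x < b \<Longrightarrow> (f has_real_derivative f' x) (at x)"
    and "\<And>x. a < x \<Longrightarrow> x < b \<Longrightarrow> 0 \<le> f' x"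
  shows "f a \<le> f b"
  using DERIV_nonneg_imp_increasing_open[OF assms(1) _ assms(2)] assms(3,4) by blast

lemma DERIV_powr_over_exponent:
  fixes c e s :: real
  assumes "0 < s" "e \<noteq> 0"
  shows "((\<lambda>s. c * s powr e / e) has_real_derivative c * s powr (e - 1)) (at s)"
proof -
  have "((\<lambda>s. c * s powr e / e) has_real_derivative c * (e * s powr (e - 1)) / e) (at s)"
    using assms by (intro DERIV_cdivide DERIV_cmult has_real_derivative_powr)
  then show ?thesis using assms by simp
qed

lemma continuous_on_powr_const_exponent:
  fixes a c e :: real
  assumes "0 < e" "0 \<le> a"
  shows "continuous_on {a..c} (\<lambda>s. s powr e)"
  using assms by (intro continuous_on_powr' continuous_intros) auto

lemma abs_powr_diff_one_mult: "\<bar>z\<bar> powr (e - 1) * \<bar>z\<bar> = \<bar>z\<bar> powr e" for z e :: real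
proof (cases "z = 0")
  case False
  have "\<bar>z\<bar> powr (e - 1) * \<bar>z\<bar> powr 1 = \<bar>z\<bar> powr (e - 1 + 1)"
    by (rule powr_add[symmetric])
  then show ?thesis by simp
qed simp

section \<open>The rescaled problem\<close>

text \<open>In the application n = N + \<alpha> and b = N + \<beta>, the coefficient D ranges in [Dlo, Dhi], and D0
  is its value at the origin.\<close>

locale pohozaev_setting =
  fixes n m b p Dlo Dhi D0 :: real
  assumes m_gt_1: "1 < m" and m_lt_n: "m < n" and b_gt: "0 < b - n + 1" and p_gt: "m - 1 < p"
    and subcritical: "(p + 1) * (n - m) < m * b"
    and Dlo_pos: "0 < Dlo" and Dlo_le_Dhi: "Dlo \<le> Dhi" and D0_pos: "0 < D0"
begin

lemma b_pos: "0 < b" using m_gt_1 m_lt_n b_gt by linarith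
lemma p_pos: "0 < p" using m_gt_1 p_gt by linarith

definition "inv_m1 = 1 / (m - 1)"
definition "\<theta> = (b - n + 1) / (m - 1)"
definition "\<sigma> = p / (m - 1)"
definition "\<kappa> = (\<theta> + 1) / (\<sigma> - 1)"

lemma inv_m1_pos: "0 < inv_m1" using m_gt_1 by (simp add: inv_m1_def)
lemma \<theta>_pos: "0 < \<theta>" using m_gt_1 b_gt by (simp add: \<theta>_def)
lemma \<sigma>_gt_1: "1 < \<sigma>" using m_gt_1 p_gt by (simp add: \<sigma>_def)

lemma powr_inv_m1_factor:
  assumes "0 \<le> c" "0 < x"
  shows "(c * x powr b * x powr (1 - n)) powr inv_m1 = c powr inv_m1 * x powr \<theta>"
proof -
  have "b + (1 - n) = b - n + 1" by simp
  then have "c * x powr b * x powr (1 - n) = c * x powr (b - n + 1)"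
    by (simp only: mult.assoc powr_add[symmetric])
  moreover have "\<theta> = (b - n + 1) * inv_m1" by (simp add: \<theta>_def inv_m1_def)
  ultimately show ?thesis
    by (simp only: powr_mult powr_powr)
qed

lemma \<kappa>_mult: "\<kappa> * (p - m + 1) = b - n + m"
proof -
  have "\<sigma> - 1 = (p - m + 1) / (m - 1)" using m_gt_1 by (simp add: \<sigma>_def field_simps)
  moreover have "\<theta> + 1 = (b - n + m) / (m - 1)" using m_gt_1 by (simp add: \<theta>_def field_simps)
  ultimately show ?thesis using m_gt_1 p_gt by (simp add: \<kappa>_def)
qed

lemma \<kappa>_gt: "(n - m) / m < \<kappa>"
proof -
  have "(n - m) * (p - m + 1) < m * (b - n + m)" using subcritical by (simp add: algebra_simps)
  also have "\<dots> = (m * \<kappa>) * (p - m + 1)" using \<kappa>_mult by simp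
  finally have "n - m < m * \<kappa>" using p_gt by (simp add: mult_less_cancel_right)
  then show ?thesis using m_gt_1 by (simp add: field_simps)
qed

definition "Cu = (Dhi / b) powr inv_m1"
definition "cu = (Dlo / b) powr inv_m1"
definition "Cw = ((\<sigma> - 1) * cu / (\<theta> + 1)) powr (-1 / (\<sigma> - 1))"

lemma Cu_pos: "0 < Cu" using Dlo_pos Dlo_le_Dhi b_pos by (simp add: Cu_def)
lemma cu_pos: "0 < cu" using Dlo_pos b_pos by (simp add: cu_def)

definition "x_half = ((\<theta> + 1) / (2 * Cu)) powr (1 / (\<theta> + 1))"

lemma x_half_pos: "0 < x_half"
  using Cu_pos \<theta>_pos by (simp add: x_half_def)

lemma Cu_x_half: "Cu * x_half powr (\<theta> + 1) / (\<theta> + 1) = 1/2"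
  using Cu_pos \<theta>_pos by (simp add: x_half_def powr_powr)

definition "w_floor K =
  min (1/2) ((Dlo * (x_half powr b * (1/2) powr p / b) * (2 * K) powr (1 - n)) powr inv_m1 * K / 2)"

lemma w_floor_pos: "0 < K \<Longrightarrow> 0 < w_floor K"
  using Dlo_pos x_half_pos b_pos by (simp add: w_floor_def)

definition "t_radius \<tau> = (2 * (\<theta> + 1) / (Dlo / b * \<tau>) powr inv_m1) powr (1 / (\<theta> + 1))"

text \<open>A0 is the rate in the Pohozaev identity of the frozen problem; A0 > 0 is where the
  subcriticality of p enters.\<close>
definition "A0 = b / (p + 1) - (n - m) / m"

lemma A0_pos: "0 < A0"
proof -
  have "(n - m) / m < b / (p + 1)" using subcritical m_gt_1 p_pos by (simp add: field_simps)
  then show ?thesis by (simp add: A0_def)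
qed

lemma A0_le: "A0 \<le> b - (n - m) / m"
proof -
  have "b / (p + 1) \<le> b" using b_pos p_pos by (simp add: field_simps)
  then show ?thesis by (simp add: A0_def)
qed

definition "err_coeff K = (D0 / b) powr inv_m1 * K powr \<theta> * (K powr b * (1 + (n - m) / (m * b)))"

lemma err_coeff_pos: "0 < K \<Longrightarrow> 0 < err_coeff K"
  unfolding err_coeff_def using D0_pos b_pos m_lt_n m_gt_1
  by (intro mult_pos_pos add_pos_pos divide_pos_pos) auto

definition "poho_rate = A0 * (1/2) powr (p + 1)"

lemma poho_rate_pos: "0 < poho_rate"
  using A0_pos by (simp add: poho_rate_def)

definition "poho_gain = poho_rate * x_half powr b / b"

lemma poho_gain_pos: "0 < poho_gain"
  using poho_rate_pos x_half_pos b_pos by (simp add: poho_gain_def)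

text \<open>The Pohozaev function is only known to be differentiable on (0, L), so its lower bound is
  propagated from this small positive radius, where its value is negligible.\<close>
definition "poho_start =
  x_half * min 1 ((poho_rate / (4 * (poho_rate + (n - m) / m))) powr (1 / b))"

lemma poho_start_pos: "0 < poho_start" and poho_start_le: "poho_start \<le> x_half"
proof -
  define c where "c = poho_rate / (4 * (poho_rate + (n - m) / m))"
  have "0 < c"
    unfolding c_def using poho_rate_pos m_lt_n m_gt_1 by (intro divide_pos_pos mult_pos_pos add_pos_pos) auto
  then have "0 < c powr (1 / b)" by simp
  then show "0 < poho_start" "poho_start \<le> x_half"
    unfolding poho_start_def c_def[symmetric] using x_half_pos by (auto simp: mult_le_cancel_left1)
qed

lemma poho_start_small: "(poho_rate + (n - m) / m) * (poho_start powr b / b) \<le> poho_gain / 4"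
proof -
  define d where "d = (n - m) / m"
  have d: "0 < d" using m_lt_n m_gt_1 by (simp add: d_def)
  have "poho_start powr b \<le> (x_half * (poho_rate / (4 * (poho_rate + d))) powr (1 / b)) powr b"
    using poho_start_pos x_half_pos poho_rate_pos d b_pos
    by (intro powr_mono2) (auto simp: poho_start_def d_def)
  also have "\<dots> = x_half powr b * (poho_rate / (4 * (poho_rate + d)))"
    using b_pos poho_rate_pos d by (simp add: powr_mult powr_powr)
  finally have "(poho_rate + d) * poho_start powr b \<le> (poho_rate + d) * (x_half powr b * (poho_rate / (4 * (poho_rate + d))))"
    using poho_rate_pos d by (intro mult_left_mono) auto
  also have "\<dots> = x_half powr b * poho_rate / 4" using poho_rate_pos d by (simp add: field_simps)
  finally have "(poho_rate + d) * poho_start powr b / b \<le> x_half powr b * poho_rate / 4 / b"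
    using b_pos by (intro divide_right_mono) auto
  then show ?thesis by (simp add: d_def poho_gain_def mult_ac)
qed

definition "y_exp = (max (b - p * \<kappa>) 0 + (n - m) / m) / 2"

lemma y_exp_pos: "0 < y_exp" and y_exp_ge: "b - p * \<kappa> \<le> y_exp" and y_exp_lt: "y_exp < (n - m) / m"
proof -
  have "b - p * \<kappa> = n - m - (m - 1) * \<kappa>" using \<kappa>_mult by (simp add: algebra_simps)
  also have "\<dots> < n - m - (m - 1) * ((n - m) / m)"
    using mult_strict_left_mono[OF \<kappa>_gt, of "m - 1"] m_gt_1 by linarith
  also have "\<dots> = (n - m) / m" using m_gt_1 by (simp add: field_simps)
  finally have "b - p * \<kappa> < (n - m) / m" .
  moreover have "0 < (n - m) / m" using m_lt_n m_gt_1 by simp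
  moreover define d where "d = (n - m) / m"
  ultimately show "0 < y_exp" "b - p * \<kappa> \<le> y_exp" "y_exp < (n - m) / m"
    unfolding y_exp_def d_def[symmetric] by (auto simp: max_def)
qed

text \<open>Upper bound for the Pohozaev function at K coming from the decay of w; the exponents
  \<zeta>1, \<zeta>2 are positive again by subcriticality.\<close>

definition "Cy = 1 / b + Cw powr p / y_exp"
definition "\<zeta>1 = (n - m - m * y_exp) / (m - 1)"
definition "\<zeta>2 = \<kappa> * (p + 1) - b"
definition "poho_upper K =
  (m - 1) / m * (D0 * 2 * Cy) powr inv_m1 * (2 * Cy) * K powr (- \<zeta>1)
  + Cw powr (p + 1) / (p + 1) * K powr (- \<zeta>2)"

lemma poho_upper_tendsto_0: "(poho_upper \<longlongrightarrow> 0) at_top"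
proof -
  have "0 < \<zeta>1" using y_exp_lt m_gt_1 by (simp add: \<zeta>1_def field_simps)
  moreover have "0 < \<zeta>2" using \<kappa>_mult \<kappa>_gt m_gt_1 by (simp add: \<zeta>2_def field_simps)
  ultimately show ?thesis
    unfolding poho_upper_def[abs_def]
    by (intro tendsto_add_zero tendsto_mult_right_zero tendsto_neg_powr filterlim_ident) auto
qed

end

text \<open>w is the rescaled solution, u = -w', y the negated rescaled flux x^(n-1) u^(m-1) / D, and
  t = 1/(1 + \<rho>) accounts for the term \<xi>/h(\<parallel>v\<parallel>) of the source.\<close>

locale scaled_solution = pohozaev_setting +
  fixes t L :: real and w y u D :: "real \<Rightarrow> real"
  assumes t_pos: "0 < t" and t_le_1: "t \<le> 1"
    and w_cont: "continuous_on {0..<L} w" and w_0: "w 0 = 1"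
    and w_range: "\<And>x. 0 \<le> x \<Longrightarrow> x < L \<Longrightarrow> 0 < w x \<and> w x \<le> 1"
    and w_deriv: "\<And>x. 0 < x \<Longrightarrow> x < L \<Longrightarrow> (w has_real_derivative - u x) (at x)"
    and y_cont: "continuous_on {0..<L} y" and y_0: "y 0 = 0"
    and y_deriv: "\<And>x. 0 < x \<Longrightarrow> x < L \<Longrightarrow>
      (y has_real_derivative x powr (b - 1) * (t * w x powr p + (1 - t))) (at x)"
    and u_eq_root: "\<And>x. 0 < x \<Longrightarrow> x < L \<Longrightarrow> u x = (D x * y x * x powr (1 - n)) powr (1 / (m - 1))"
    and D_range: "\<And>x. 0 < x \<Longrightarrow> x < L \<Longrightarrow> Dlo \<le> D x \<and> D x \<le> Dhi"
begin

lemma u_eq: "0 < x \<Longrightarrow> x < L \<Longrightarrow> u x = (D x * y x * x powr (1 - n)) powr inv_m1"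
  using u_eq_root by (simp add: inv_m1_def)

lemma u_nonneg: "0 < x \<Longrightarrow> x < L \<Longrightarrow> 0 \<le> u x"
  using u_eq by simp

lemma w_drop:
  assumes "0 \<le> x" "x \<le> x'" "x' < L" and u_ge: "\<And>s. x < s \<Longrightarrow> s < x' \<Longrightarrow> c \<le> u s"
  shows "w x' \<le> w x - c * (x' - x)"
proof -
  define f where "f s = - w s - c * s" for s
  have "f x \<le> f x'"
  proof (rule le_by_nonneg_deriv[where a = x and b = x' and f' = "\<lambda>s. u s - c"])
    show "continuous_on {x..x'} f"
      unfolding f_def using assms by (intro continuous_intros continuous_on_subset[OF w_cont]) auto
    show "(f has_real_derivative u s - c) (at s)" if "x < s" "s < x'" for s
      unfolding f_def[abs_def] using that assms
      by (auto intro!: derivative_eq_intros w_deriv[of s])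
  qed (use assms in auto)
  then show ?thesis by (simp add: f_def algebra_simps)
qed

lemma w_antimono: "0 \<le> x \<Longrightarrow> x \<le> x' \<Longrightarrow> x' < L \<Longrightarrow> w x' \<le> w x"
  using w_drop[of x x' 0] u_nonneg by simp

lemma source_le_1: "0 \<le> x \<Longrightarrow> x < L \<Longrightarrow> t * w x powr p + (1 - t) \<le> 1"
  using w_range[of x] t_pos t_le_1 p_pos powr_le1[of p "w x"]
  by (smt (verit) mult_left_le)

lemma source_ge:
  assumes "0 \<le> x" "x < L"
  shows "w x powr p \<le> t * w x powr p + (1 - t)" "1 - t \<le> t * w x powr p + (1 - t)"
proof -
  have "w x powr p \<le> 1" using w_range[OF assms] p_pos by (intro powr_le1) auto
  then have "0 \<le> (1 - t) * (1 - w x powr p)" using t_le_1 by simp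
  then show "w x powr p \<le> t * w x powr p + (1 - t)" by (simp add: algebra_simps)
  show "1 - t \<le> t * w x powr p + (1 - t)" using t_pos by simp
qed

lemma y_le: "0 \<le> x \<Longrightarrow> x < L \<Longrightarrow> y x \<le> x powr b / b"
  using le_by_nonneg_deriv[where f = "\<lambda>s. s powr b / b - y s"
      and f' = "\<lambda>s. s powr (b - 1) - s powr (b - 1) * (t * w s powr p + (1 - t))", of 0 x]
    y_0 b_pos source_le_1
  by (fastforce intro!: continuous_intros continuous_on_powr_const_exponent
      continuous_on_subset[OF y_cont] derivative_eq_intros y_deriv simp: mult_left_le)

lemma y_ge_w:
  assumes "0 \<le> x" "x < L"
  shows "x powr b * w x powr p / b \<le> y x"
proof -
  have "w x powr p \<le> t * w s powr p + (1 - t)" if "0 < s" "s < x" for s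
  proof -
    have "w x powr p \<le> w s powr p"
      using w_antimono[of s x] w_range[of x] that assms p_pos by (intro powr_mono2) auto
    then show ?thesis using source_ge(1)[of s] that assms by linarith
  qed
  then show ?thesis
    using le_by_nonneg_deriv[where f = "\<lambda>s. y s - s powr b * w x powr p / b"
        and f' = "\<lambda>s. s powr (b - 1) * (t * w s powr p + (1 - t)) - s powr (b - 1) * w x powr p", of 0 x]
      assms y_0 b_pos
    by (fastforce intro!: continuous_intros continuous_on_powr_const_exponent
        continuous_on_subset[OF y_cont] derivative_eq_intros y_deriv
        simp: right_diff_distrib[symmetric] mult_left_mono)
qed

lemma y_ge_1_minus_t: "0 \<le> x \<Longrightarrow> x < L \<Longrightarrow> (1 - t) * x powr b / b \<le> y x"
  using le_by_nonneg_deriv[where f = "\<lambda>s. y s - (1 - t) * s powr b / b"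
      and f' = "\<lambda>s. s powr (b - 1) * (t * w s powr p + (1 - t)) - (1 - t) * s powr (b - 1)", of 0 x]
    y_0 b_pos source_ge(2)
  by (fastforce intro!: continuous_intros continuous_on_powr_const_exponent
      continuous_on_subset[OF y_cont] derivative_eq_intros y_deriv simp: mult.commute mult_left_mono)

lemma y_nonneg: "0 \<le> x \<Longrightarrow> x < L \<Longrightarrow> 0 \<le> y x"
  using y_ge_1_minus_t[of x] t_le_1 b_pos by (smt (verit) divide_nonneg_pos mult_nonneg_nonneg powr_ge_zero)

lemma y_pos: "0 < x \<Longrightarrow> x < L \<Longrightarrow> 0 < y x"
  using y_ge_w[of x] w_range[of x] b_pos by (smt (verit) divide_pos_pos mult_pos_pos powr_gt_zero)

lemma y_mono: "0 \<le> x \<Longrightarrow> x \<le> x' \<Longrightarrow> x' < L \<Longrightarrow> y x \<le> y x'"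
  using le_by_nonneg_deriv[where f = y and f' = "\<lambda>s. s powr (b - 1) * (t * w s powr p + (1 - t))", of x x']
    source_ge(2) t_le_1
  by (fastforce intro!: continuous_on_subset[OF y_cont] y_deriv mult_nonneg_nonneg)

lemma u_le: "0 < x \<Longrightarrow> x < L \<Longrightarrow> u x \<le> Cu * x powr \<theta>"
proof -
  assume x: "0 < x" "x < L"
  have "u x \<le> ((Dhi / b) * x powr b * x powr (1 - n)) powr inv_m1"
    unfolding u_eq[OF x]
  proof (intro powr_mono2 mult_right_mono)
    have "D x * y x \<le> Dhi * (x powr b / b)"
      using D_range[OF x] Dlo_pos y_nonneg[of x] y_le[of x] x by (intro mult_mono) auto
    then show "D x * y x \<le> Dhi / b * x powr b" by simp
  qed (use D_range[OF x] Dlo_pos y_nonneg[of x] x inv_m1_pos in auto)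
  also have "\<dots> = Cu * x powr \<theta>"
    using x Dlo_pos D_range[OF x] b_pos by (subst powr_inv_m1_factor) (auto simp: Cu_def)
  finally show ?thesis .
qed

lemma u_ge_of_y_ge:
  assumes x: "0 < x" "x < L" and c: "0 \<le> c" and y_ge: "c * x powr b / b \<le> y x"
  shows "(Dlo / b * c) powr inv_m1 * x powr \<theta> \<le> u x"
proof -
  have "(Dlo / b * c) powr inv_m1 * x powr \<theta> = (Dlo / b * c * x powr b * x powr (1 - n)) powr inv_m1"
    using x c Dlo_pos b_pos by (subst powr_inv_m1_factor) auto
  also have "\<dots> \<le> u x"
    unfolding u_eq[OF x]
  proof (intro powr_mono2 mult_right_mono)
    have "Dlo * (c * x powr b / b) \<le> D x * y x"
      using D_range[OF x] Dlo_pos c y_ge b_pos by (intro mult_mono) auto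
    then show "Dlo / b * c * x powr b \<le> D x * y x" by simp
  qed (use c Dlo_pos b_pos inv_m1_pos in auto)
  finally show ?thesis .
qed

lemma u_ge_w:
  assumes "0 < x" "x < L"
  shows "cu * x powr \<theta> * w x powr \<sigma> \<le> u x"
proof -
  have "(Dlo / b * w x powr p) powr inv_m1 = cu * w x powr \<sigma>"
    unfolding cu_def \<sigma>_def inv_m1_def by (rule trans[OF powr_mult]) (simp_all add: powr_powr)
  then show ?thesis
    using u_ge_of_y_ge[of x "w x powr p"] y_ge_w[of x] assms by (simp add: mult_ac)
qed

lemma w_ge:
  assumes "0 \<le> x" "x < L"
  shows "1 - Cu * x powr (\<theta> + 1) / (\<theta> + 1) \<le> w x"
proof -
  define f where "f s = w s + Cu * s powr (\<theta> + 1) / (\<theta> + 1)" for s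
  have "f 0 \<le> f x"
  proof (rule le_by_nonneg_deriv[where a = 0 and b = x and f' = "\<lambda>s. - u s + Cu * s powr \<theta>"])
    show "continuous_on {0..x} f"
      unfolding f_def using assms \<theta>_pos
      by (intro continuous_intros continuous_on_powr_const_exponent continuous_on_subset[OF w_cont]) auto
    show "(f has_real_derivative - u s + Cu * s powr \<theta>) (at s)" if "0 < s" "s < x" for s
      unfolding f_def[abs_def]
      using DERIV_add[OF w_deriv[of s] DERIV_powr_over_exponent[of s "\<theta> + 1" Cu]] that assms \<theta>_pos by simp
  qed (use assms u_le in auto)
  then show ?thesis using w_0 \<theta>_pos by (simp add: f_def)
qed

lemma w_le_of_u_ge:
  assumes "0 \<le> x" "x < L" and u_ge: "\<And>s. 0 < s \<Longrightarrow> s < x \<Longrightarrow> c * s powr \<theta> \<le> u s"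
  shows "w x \<le> 1 - c * x powr (\<theta> + 1) / (\<theta> + 1)"
proof -
  define f where "f s = - w s - c * s powr (\<theta> + 1) / (\<theta> + 1)" for s
  have "f 0 \<le> f x"
  proof (rule le_by_nonneg_deriv[where a = 0 and b = x and f' = "\<lambda>s. u s - c * s powr \<theta>"])
    show "continuous_on {0..x} f"
      unfolding f_def using assms \<theta>_pos
      by (intro continuous_intros continuous_on_powr_const_exponent continuous_on_subset[OF w_cont]) auto
    show "(f has_real_derivative u s - c * s powr \<theta>) (at s)" if "0 < s" "s < x" for s
      unfolding f_def[abs_def]
      using DERIV_diff[OF DERIV_minus[OF w_deriv[of s]] DERIV_powr_over_exponent[of s "\<theta> + 1" c]]
        that assms \<theta>_pos by simp
  qed (use assms u_ge in auto)
  then show ?thesis using w_0 \<theta>_pos by (simp add: f_def)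
qed

lemma w_powr_ge:
  assumes "0 \<le> x" "x < L"
  shows "1 + (\<sigma> - 1) * cu * x powr (\<theta> + 1) / (\<theta> + 1) \<le> w x powr (1 - \<sigma>)"
proof -
  define f where "f s = w s powr (1 - \<sigma>) - (\<sigma> - 1) * cu * s powr (\<theta> + 1) / (\<theta> + 1)" for s
  have "f 0 \<le> f x"
  proof (rule le_by_nonneg_deriv[where a = 0 and b = x
        and f' = "\<lambda>s. (1 - \<sigma>) * w s powr (1 - \<sigma> - 1) * (- u s) - (\<sigma> - 1) * cu * s powr \<theta>"])
    have "w s \<noteq> 0" if "s \<in> {0..x}" for s using w_range[of s] that assms by auto
    then show "continuous_on {0..x} f"
      unfolding f_def using assms \<theta>_pos
      by (intro continuous_intros continuous_on_powr_const_exponent continuous_on_subset[OF w_cont]) auto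
    show "(f has_real_derivative (1 - \<sigma>) * w s powr (1 - \<sigma> - 1) * (- u s) - (\<sigma> - 1) * cu * s powr \<theta>) (at s)"
      if "0 < s" "s < x" for s
    proof -
      have "((\<lambda>s. w s powr (1 - \<sigma>)) has_real_derivative (1 - \<sigma>) * w s powr (1 - \<sigma> - of_nat 1) * (- u s)) (at s)"
        using w_deriv[of s] w_range[of s] that assms by (intro DERIV_fun_powr) auto
      then show ?thesis
        unfolding f_def[abs_def]
        using DERIV_diff[OF _ DERIV_powr_over_exponent[of s "\<theta> + 1" "(\<sigma> - 1) * cu"]] that \<theta>_pos by simp
    qed
    show "0 \<le> (1 - \<sigma>) * w s powr (1 - \<sigma> - 1) * (- u s) - (\<sigma> - 1) * cu * s powr \<theta>"
      if "0 < s" "s < x" for s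
    proof -
      have ws: "0 < w s" using w_range[of s] that assms by auto
      have "cu * s powr \<theta> = w s powr (- \<sigma>) * (cu * s powr \<theta> * w s powr \<sigma>)"
        using ws by (simp add: powr_minus field_simps)
      also have "\<dots> \<le> w s powr (- \<sigma>) * u s"
        using u_ge_w[of s] that assms by (intro mult_left_mono) auto
      finally have "0 \<le> (\<sigma> - 1) * (w s powr (- \<sigma>) * u s - cu * s powr \<theta>)" using \<sigma>_gt_1 by auto
      then show ?thesis by (simp add: algebra_simps)
    qed
  qed (use assms in auto)
  then show ?thesis using w_0 \<theta>_pos by (simp add: f_def)
qed

lemma w_le_decay:
  assumes "0 < x" "x < L"
  shows "w x \<le> Cw * x powr (- \<kappa>)"
proof -
  define A where "A = (\<sigma> - 1) * cu / (\<theta> + 1)"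
  have A: "0 < A" using cu_pos \<sigma>_gt_1 \<theta>_pos by (simp add: A_def)
  have "A * x powr (\<theta> + 1) \<le> w x powr (1 - \<sigma>)"
    using w_powr_ge[of x] assms by (simp add: A_def)
  then have "(w x powr (1 - \<sigma>)) powr (-1 / (\<sigma> - 1)) \<le> (A * x powr (\<theta> + 1)) powr (-1 / (\<sigma> - 1))"
    using A assms \<sigma>_gt_1 by (intro powr_mono2') auto
  also have "(w x powr (1 - \<sigma>)) powr (-1 / (\<sigma> - 1)) = w x"
  proof -
    have "(1 - \<sigma>) * (-1 / (\<sigma> - 1)) = 1" using \<sigma>_gt_1 by (simp add: field_simps)
    then show ?thesis using w_range[of x] assms by (simp add: powr_powr)
  qed
  also have "(A * x powr (\<theta> + 1)) powr (-1 / (\<sigma> - 1)) = A powr (-1 / (\<sigma> - 1)) * x powr ((\<theta> + 1) * (-1 / (\<sigma> - 1)))"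
    by (simp only: powr_mult powr_powr)
  also have "(\<theta> + 1) * (-1 / (\<sigma> - 1)) = - \<kappa>" by (simp add: \<kappa>_def)
  finally show ?thesis by (simp add: Cw_def A_def)
qed

lemma y_le_far:
  assumes "1 \<le> x" "x < L" "0 < e" "b - p * \<kappa> \<le> e"
  shows "y x \<le> 1 / b + Cw powr p * x powr e / e + (1 - t) * x powr b / b"
proof -
  define f where "f s = Cw powr p * s powr e / e + (1 - t) * s powr b / b - y s" for s
  have "f 1 \<le> f x"
  proof (rule le_by_nonneg_deriv[where a = 1 and b = x
        and f' = "\<lambda>s. Cw powr p * s powr (e - 1) + (1 - t) * s powr (b - 1) - s powr (b - 1) * (t * w s powr p + (1 - t))"])
    show "continuous_on {1..x} f"
      unfolding f_def using assms b_pos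
      by (intro continuous_intros continuous_on_powr_const_exponent continuous_on_subset[OF y_cont]) auto
    show "(f has_real_derivative Cw powr p * s powr (e - 1) + (1 - t) * s powr (b - 1)
        - s powr (b - 1) * (t * w s powr p + (1 - t))) (at s)" if "1 < s" "s < x" for s
      unfolding f_def[abs_def]
      using DERIV_diff[OF DERIV_add[OF DERIV_powr_over_exponent[of s e "Cw powr p"]
            DERIV_powr_over_exponent[of s b "1 - t"]] y_deriv[of s]] that assms b_pos by simp
    show "0 \<le> Cw powr p * s powr (e - 1) + (1 - t) * s powr (b - 1) - s powr (b - 1) * (t * w s powr p + (1 - t))"
      if "1 < s" "s < x" for s
    proof -
      have s: "0 < s" "s < L" using that assms by auto
      have "t * w s powr p \<le> w s powr p" using t_pos t_le_1 by (simp add: mult_left_le_one_le)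
      also have "w s powr p \<le> (Cw * s powr (- \<kappa>)) powr p"
        using w_le_decay[OF s] w_range[of s] s p_pos by (intro powr_mono2) auto
      also have "\<dots> = Cw powr p * s powr (- \<kappa> * p)" by (simp add: powr_mult powr_powr)
      finally have "s powr (b - 1) * (t * w s powr p) \<le> s powr (b - 1) * (Cw powr p * s powr (- \<kappa> * p))"
        by (intro mult_left_mono) auto
      also have "\<dots> = Cw powr p * s powr (b - 1 - \<kappa> * p)"
        by (simp add: powr_add[symmetric] algebra_simps)
      also have "\<dots> \<le> Cw powr p * s powr (e - 1)"
        using that assms by (intro mult_left_mono powr_mono) (auto simp: algebra_simps)
      finally show ?thesis by (simp add: algebra_simps)
    qed
  qed (use assms in auto)
  moreover have "y 1 \<le> 1 / b" using y_le[of 1] assms by simp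
  moreover have "0 \<le> Cw powr p / e" "0 \<le> (1 - t) / b" using assms b_pos t_le_1 by auto
  ultimately show ?thesis unfolding f_def by simp
qed

lemma w_ge_half:
  assumes "0 \<le> x" "x \<le> x_half" "x < L"
  shows "1/2 \<le> w x"
proof -
  have "x powr (\<theta> + 1) \<le> x_half powr (\<theta> + 1)" using assms \<theta>_pos by (intro powr_mono2) auto
  then have "Cu * x powr (\<theta> + 1) / (\<theta> + 1) \<le> Cu * x_half powr (\<theta> + 1) / (\<theta> + 1)"
    using Cu_pos \<theta>_pos by (intro divide_right_mono mult_left_mono) auto
  then show ?thesis using w_ge[of x] assms Cu_x_half by linarith
qed

lemma w_ge_floor:
  assumes K: "x_half \<le> K" "2 * K < L" and x: "0 \<le> x" "x \<le> K"
  shows "w_floor K \<le> w x"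
proof (rule ccontr)
  assume "\<not> w_floor K \<le> w x"
  then have wx: "w x < w_floor K" by simp
  define c where "c = (Dlo * (x_half powr b * (1/2) powr p / b) * (2 * K) powr (1 - n)) powr inv_m1"
  have c_pos: "0 < c" using Dlo_pos x_half_pos b_pos K by (simp add: c_def)
  have floor: "w_floor K \<le> 1/2" "w_floor K \<le> c * K / 2" by (simp_all add: w_floor_def c_def)
  have x_gt: "x_half < x" using w_ge_half[of x] x K floor wx by force
  define x' where "x' = x + 2 * w_floor K / c"
  have "2 * w_floor K / c \<le> K" using floor c_pos by (simp add: field_simps)
  moreover have floor_nonneg: "0 \<le> w_floor K" using wx w_range[of x] x K by auto
  ultimately have x': "x' \<le> 2 * K" "x \<le> x'" using x c_pos by (auto simp: x'_def)
  \<comment> \<open>Beyond x_half, y stays above y(x_half), so u is bounded below by c up to 2K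
    and w would drop by 2 w_floor K, below 0, before reaching 2K.\<close>
  have "c \<le> u s" if "x < s" "s < x'" for s
  proof -
    have s: "0 < s" "s < L" using that x_gt x' x_half_pos K by auto
    have "x_half powr b * (1/2) powr p / b \<le> x_half powr b * w x_half powr p / b"
      using w_ge_half[of x_half] x_half_pos K b_pos p_pos
      by (intro divide_right_mono mult_left_mono powr_mono2) auto
    also have "\<dots> \<le> y x_half" using y_ge_w[of x_half] x_half_pos K by auto
    also have "\<dots> \<le> y s" using y_mono[of x_half s] x_gt that s x_half_pos by auto
    finally have ys: "x_half powr b * (1/2) powr p / b \<le> y s" .
    have "(2 * K) powr (1 - n) \<le> s powr (1 - n)"
      using that x' s m_lt_n m_gt_1 by (intro powr_mono2') auto
    then have "Dlo * (x_half powr b * (1/2) powr p / b) * (2 * K) powr (1 - n) \<le> D s * y s * s powr (1 - n)"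
      using D_range[OF s] Dlo_pos ys y_nonneg[of s] s b_pos by (intro mult_mono) auto
    then show ?thesis
      unfolding c_def u_eq[OF s] using inv_m1_pos Dlo_pos b_pos by (intro powr_mono2) auto
  qed
  then have "w x' \<le> w x - c * (x' - x)"
    using w_drop[of x x' c] x x' K by auto
  also have "c * (x' - x) = 2 * w_floor K" using c_pos by (simp add: x'_def)
  finally have "w x' < 0" using wx floor_nonneg by linarith
  then show False using w_range[of x'] x x' K by auto
qed

text \<open>If 1 - t is not small, the constant part of the source alone drives w below 0 before
  t_radius \<tau>.\<close>

lemma t_close_to_1:
  assumes \<tau>: "0 < \<tau>" and long: "t_radius \<tau> < L"
  shows "1 - t \<le> \<tau>"
proof (rule ccontr)
  assume "\<not> 1 - t \<le> \<tau>"
  define c where "c = (Dlo / b * \<tau>) powr inv_m1"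
  define K where "K = t_radius \<tau>"
  have c_pos: "0 < c" using \<tau> Dlo_pos b_pos by (simp add: c_def)
  have K: "0 < K" "K < L"
    using long c_pos \<theta>_pos unfolding K_def t_radius_def c_def[symmetric] by auto
  have "K powr (\<theta> + 1) = 2 * (\<theta> + 1) / c"
    unfolding K_def t_radius_def c_def[symmetric] using c_pos \<theta>_pos by (simp add: powr_powr)
  then have bound: "c * K powr (\<theta> + 1) / (\<theta> + 1) = 2" using c_pos \<theta>_pos by (simp add: field_simps)
  have "c * s powr \<theta> \<le> u s" if "0 < s" "s < K" for s
  proof -
    have "c \<le> (Dlo / b * (1 - t)) powr inv_m1"
      unfolding c_def using \<open>\<not> 1 - t \<le> \<tau>\<close> \<tau> Dlo_pos b_pos inv_m1_pos
      by (intro powr_mono2 mult_left_mono) auto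
    then have "c * s powr \<theta> \<le> (Dlo / b * (1 - t)) powr inv_m1 * s powr \<theta>"
      by (intro mult_right_mono) auto
    also have "\<dots> \<le> u s"
      using u_ge_of_y_ge[of s "1 - t"] y_ge_1_minus_t[of s] that K \<open>\<not> 1 - t \<le> \<tau>\<close> \<tau> by auto
    finally show ?thesis .
  qed
  then have "w K \<le> -1" using w_le_of_u_ge[of K c] K bound by auto
  then show False using w_range[of K] K by auto
qed

section \<open>The Pohozaev function\<close>

text \<open>The Pohozaev function of the problem with coefficient frozen at D0; in its derivative the
  second summand is the error caused by D \<noteq> D0.\<close>

definition "source x = t * w x powr p + (1 - t)"
definition "source_prim x = t * w x powr (p + 1) / (p + 1) + (1 - t) * w x"
definition "u0 x = (D0 * y x * x powr (1 - n)) powr inv_m1"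
definition "poho x = (m - 1) / m * x * u0 x * y x + x powr b * source_prim x - (n - m) / m * w x * y x"
definition "poho_deriv x = x powr (b - 1) * (b * source_prim x - (n - m) / m * w x * source x)
  + (u0 x - u x) * (x powr b * source x - (n - m) / m * y x)"

lemma u0_deriv:
  assumes x: "0 < x" "x < L"
  shows "(u0 has_real_derivative inv_m1 * u0 x * (x powr (b - 1) * source x / y x + (1 - n) / x)) (at x)"
proof -
  define Z where "Z s = D0 * y s * s powr (1 - n)" for s
  have y: "0 < y x" using y_pos[OF x] .
  have Z: "0 < Z x" unfolding Z_def using y D0_pos x by auto
  have "(Z has_real_derivative D0 * (x powr (b - 1) * source x) * x powr (1 - n)
      + (1 - n) * x powr (1 - n - 1) * (D0 * y x)) (at x)"
    unfolding Z_def[abs_def] source_def using x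
    by (intro DERIV_mult DERIV_cmult y_deriv has_real_derivative_powr) auto
  also have "x powr (1 - n - 1) = x powr (1 - n) / x"
    using powr_diff[of x "1 - n" 1] x by simp
  also have "D0 * (x powr (b - 1) * source x) * x powr (1 - n) + (1 - n) * (x powr (1 - n) / x) * (D0 * y x)
      = Z x * (x powr (b - 1) * source x / y x + (1 - n) / x)"
    unfolding Z_def using x y by (simp add: field_simps)
  finally have "(Z has_real_derivative Z x * (x powr (b - 1) * source x / y x + (1 - n) / x)) (at x)" .
  then have "((\<lambda>s. Z s powr inv_m1) has_real_derivative
      inv_m1 * Z x powr (inv_m1 - 1) * (Z x * (x powr (b - 1) * source x / y x + (1 - n) / x))) (at x)"
    using DERIV_fun_powr[of Z _ x inv_m1] Z by simp
  moreover have "inv_m1 * Z x powr (inv_m1 - 1) * (Z x * E) = inv_m1 * u0 x * E" for E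
    using powr_diff[of "Z x" inv_m1 1] Z unfolding u0_def Z_def[symmetric] by simp
  moreover have "(\<lambda>s. Z s powr inv_m1) = u0" by (simp add: u0_def Z_def fun_eq_iff)
  ultimately show ?thesis by (simp only:)
qed

lemma x_u0_y_deriv:
  assumes x: "0 < x" "x < L"
  shows "((\<lambda>s. s * u0 s * y s) has_real_derivative
    m / (m - 1) * u0 x * (x powr b * source x - (n - m) / m * y x)) (at x)"
proof -
  have "((\<lambda>s. s * u0 s * y s) has_real_derivative
      (1 * u0 x + inv_m1 * u0 x * (x powr (b - 1) * source x / y x + (1 - n) / x) * x) * y x
      + x powr (b - 1) * source x * (x * u0 x)) (at x)"
    using x by (intro DERIV_mult DERIV_ident u0_deriv) (auto simp: y_deriv source_def)
  moreover have "x powr b = x * x powr (b - 1)" using x by (simp add: powr_mult_base)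
  ultimately show ?thesis
    by (elim DERIV_cong) (use x y_pos[OF x] m_gt_1 in \<open>simp add: inv_m1_def field_simps\<close>)
qed

lemma source_prim_deriv:
  assumes x: "0 < x" "x < L"
  shows "(source_prim has_real_derivative - source x * u x) (at x)"
proof -
  have "(source_prim has_real_derivative
      t * ((p + 1) * w x powr (p + 1 - of_nat 1) * (- u x)) / (p + 1) + (1 - t) * (- u x)) (at x)"
    unfolding source_prim_def[abs_def] using w_range[of x] x
    by (intro DERIV_add DERIV_cmult DERIV_cdivide DERIV_fun_powr w_deriv) auto
  then show ?thesis
    by (rule DERIV_cong) (use p_pos in \<open>simp add: source_def field_simps\<close>)
qed

lemma poho_has_deriv:
  assumes x: "0 < x" "x < L"
  shows "(poho has_real_derivative poho_deriv x) (at x)"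
proof -
  have "poho = (\<lambda>s. (m - 1) / m * (s * u0 s * y s) + s powr b * source_prim s - (n - m) / m * (w s * y s))"
    by (simp add: poho_def fun_eq_iff mult_ac)
  moreover have "((\<lambda>s. (m - 1) / m * (s * u0 s * y s) + s powr b * source_prim s - (n - m) / m * (w s * y s))
    has_real_derivative poho_deriv x) (at x)"
  proof (rule DERIV_cong)
    show "((\<lambda>s. (m - 1) / m * (s * u0 s * y s) + s powr b * source_prim s - (n - m) / m * (w s * y s))
      has_real_derivative
        (m - 1) / m * (m / (m - 1) * u0 x * (x powr b * source x - (n - m) / m * y x))
        + (b * x powr (b - 1) * source_prim x + - source x * u x * x powr b)
        - (n - m) / m * (- u x * y x + x powr (b - 1) * source x * w x)) (at x)"
      using x by (intro DERIV_add DERIV_diff DERIV_cmult DERIV_mult x_u0_y_deriv source_prim_deriv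
          has_real_derivative_powr w_deriv) (auto simp: y_deriv source_def)
    have "x powr b = x * x powr (b - 1)" using x by (simp add: powr_mult_base)
    then show "(m - 1) / m * (m / (m - 1) * u0 x * (x powr b * source x - (n - m) / m * y x))
        + (b * x powr (b - 1) * source_prim x + - source x * u x * x powr b)
        - (n - m) / m * (- u x * y x + x powr (b - 1) * source x * w x) = poho_deriv x"
      using m_gt_1 by (simp add: poho_deriv_def field_simps)
  qed
  ultimately show ?thesis by simp
qed

lemma source_prim_nonneg: "0 \<le> x \<Longrightarrow> x < L \<Longrightarrow> 0 \<le> source_prim x"
  using w_range[of x] t_pos t_le_1 p_pos unfolding source_prim_def
  by (intro add_nonneg_nonneg mult_nonneg_nonneg divide_nonneg_pos) auto

lemma poho_deriv_frozen_ge: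
  assumes x: "0 \<le> x" "x < L"
  shows "A0 * x powr (b - 1) * w x powr (p + 1)
    \<le> x powr (b - 1) * (b * source_prim x - (n - m) / m * w x * source x)"
proof -
  have w: "0 < w x" "w x \<le> 1" using w_range[OF x] by auto
  have ws: "w x * source x = t * w x powr (p + 1) + (1 - t) * w x"
    unfolding source_def using powr_mult_base[of "w x" p] w by (simp add: algebra_simps)
  have "b * source_prim x - d * (w x * source x)
      = t * w x powr (p + 1) * (b / (p + 1) - d) + (1 - t) * w x * (b - d)" for d
    unfolding ws source_prim_def using p_pos by (simp add: field_simps)
  then have "b * source_prim x - (n - m) / m * w x * source x
      = t * w x powr (p + 1) * A0 + (1 - t) * w x * (b - (n - m) / m)"
    by (metis A0_def mult.assoc)
  moreover have "(1 - t) * w x powr (p + 1) * A0 \<le> (1 - t) * w x * (b - (n - m) / m)"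
    using t_le_1 A0_pos A0_le w p_pos powr_le_one_le[of "w x" "p + 1"] by (intro mult_mono) auto
  ultimately have "A0 * w x powr (p + 1) \<le> b * source_prim x - (n - m) / m * w x * source x"
    by (simp add: algebra_simps)
  then show ?thesis by (simp add: mult.assoc mult.left_commute[of A0] mult_left_mono)
qed

lemma u0_minus_u_le:
  assumes x: "0 < x" "x < L" "x \<le> K" and close: "\<bar>(D x / D0) powr inv_m1 - 1\<bar> \<le> \<epsilon>"
  shows "\<bar>u0 x - u x\<bar> \<le> (D0 / b) powr inv_m1 * K powr \<theta> * \<epsilon>"
proof -
  have y: "0 \<le> y x" "y x \<le> x powr b / b" using y_nonneg[of x] y_le[of x] x by auto
  have "u x = (D x * y x * x powr (1 - n)) powr inv_m1" using u_eq x by simp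
  also have "D x * y x * x powr (1 - n) = (D x / D0) * (D0 * y x * x powr (1 - n))" using D0_pos by simp
  also have "((D x / D0) * (D0 * y x * x powr (1 - n))) powr inv_m1 = (D x / D0) powr inv_m1 * u0 x"
    unfolding u0_def by (rule powr_mult)
  finally have "u x = (D x / D0) powr inv_m1 * u0 x" .
  then have "\<bar>u0 x - u x\<bar> = \<bar>u0 x * (1 - (D x / D0) powr inv_m1)\<bar>"
    by (simp add: algebra_simps)
  also have "\<dots> = u0 x * \<bar>(D x / D0) powr inv_m1 - 1\<bar>"
    by (simp add: u0_def abs_mult abs_minus_commute)
  also have "\<dots> \<le> (D0 / b) powr inv_m1 * K powr \<theta> * \<epsilon>"
  proof (rule mult_mono)
    have "D0 * y x \<le> D0 * (x powr b / b)" using y D0_pos by (intro mult_left_mono) auto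
    then have "u0 x \<le> (D0 / b * x powr b * x powr (1 - n)) powr inv_m1"
      unfolding u0_def using y D0_pos x inv_m1_pos by (intro powr_mono2 mult_right_mono) auto
    also have "\<dots> = (D0 / b) powr inv_m1 * x powr \<theta>" using x D0_pos b_pos by (intro powr_inv_m1_factor) auto
    also have "\<dots> \<le> (D0 / b) powr inv_m1 * K powr \<theta>" using x \<theta>_pos by (intro mult_left_mono powr_mono2) auto
    finally show "u0 x \<le> (D0 / b) powr inv_m1 * K powr \<theta>" .
  qed (use close in \<open>auto simp: u0_def\<close>)
  finally show ?thesis .
qed

lemma poho_deriv_ge:
  assumes x: "0 < x" "x < L" "x \<le> K" and close: "\<bar>(D x / D0) powr inv_m1 - 1\<bar> \<le> \<epsilon>"
  shows "A0 * x powr (b - 1) * w x powr (p + 1) - \<epsilon> * err_coeff K \<le> poho_deriv x"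
proof -
  have y: "0 \<le> y x" "y x \<le> x powr b / b" using y_nonneg[of x] y_le[of x] x by auto
  have source: "0 \<le> source x" "source x \<le> 1"
    using source_le_1[of x] source_ge(2)[of x] t_le_1 x by (auto simp: source_def)
  have d: "0 < (n - m) / m" using m_lt_n m_gt_1 by auto
  have u: "\<bar>u0 x - u x\<bar> \<le> (D0 / b) powr inv_m1 * K powr \<theta> * \<epsilon>"
    by (rule u0_minus_u_le[OF x close])
  have "\<bar>x powr b * source x - (n - m) / m * y x\<bar> \<le> x powr b + (n - m) / m * (x powr b / b)"
    using source y d mult_left_le[of "source x" "x powr b"] mult_left_mono[OF y(2), of "(n - m) / m"]
    by (smt (verit) mult_nonneg_nonneg powr_ge_zero)
  also have "\<dots> = x powr b * (1 + (n - m) / (m * b))" by (simp add: field_simps)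
  also have "\<dots> \<le> K powr b * (1 + (n - m) / (m * b))"
  proof (rule mult_right_mono)
    have "0 < (n - m) / (m * b)" using m_lt_n m_gt_1 b_pos by (intro divide_pos_pos mult_pos_pos) auto
    then show "0 \<le> 1 + (n - m) / (m * b)" by linarith
  qed (use x b_pos in \<open>auto intro: powr_mono2\<close>)
  finally have "\<bar>(u0 x - u x) * (x powr b * source x - (n - m) / m * y x)\<bar> \<le> \<epsilon> * err_coeff K"
    using u unfolding abs_mult err_coeff_def
    by (smt (verit) abs_ge_zero mult.assoc mult.commute mult_mono)
  then show ?thesis
    using poho_deriv_frozen_ge[of x] x unfolding poho_deriv_def by (smt (verit) abs_le_D2)
qed

lemma poho_continuous_on: "0 < a \<Longrightarrow> c < L \<Longrightarrow> continuous_on {a..c} poho"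
  by (intro continuous_at_imp_continuous_on ballI DERIV_isCont[OF poho_has_deriv]) auto

lemma poho_ge_neg:
  assumes "0 < x" "x < L"
  shows "- ((n - m) / m * (x powr b / b)) \<le> poho x"
proof -
  have "0 \<le> (m - 1) / m * x * u0 x * y x"
    using m_gt_1 assms y_nonneg[of x] by (intro mult_nonneg_nonneg) (auto simp: u0_def)
  moreover have "0 \<le> x powr b * source_prim x" using source_prim_nonneg[of x] assms by auto
  moreover have "w x * y x \<le> 1 * (x powr b / b)"
    using w_range[of x] y_nonneg[of x] y_le[of x] assms by (intro mult_mono) auto
  then have "(n - m) / m * (w x * y x) \<le> (n - m) / m * (x powr b / b)"
    using m_lt_n m_gt_1 by (intro mult_left_mono) auto
  ultimately show ?thesis unfolding poho_def by (simp add: algebra_simps)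
qed

lemma poho_ge:
  assumes K: "x_half \<le> K" "K < L" and \<epsilon>: "0 \<le> \<epsilon>"
    and close: "\<And>x. poho_start \<le> x \<Longrightarrow> x \<le> K \<Longrightarrow> \<bar>(D x / D0) powr inv_m1 - 1\<bar> \<le> \<epsilon>"
  shows "3/4 * poho_gain - \<epsilon> * err_coeff K * K \<le> poho K"
proof -
  define E where "E = \<epsilon> * err_coeff K"
  have E: "0 \<le> E" using \<epsilon> err_coeff_pos[of K] K x_half_pos by (simp add: E_def)
  note s0 = poho_start_pos poho_start_le
  have slope: "A0 * x powr (b - 1) * w x powr (p + 1) - E \<le> poho_deriv x"
    if "poho_start \<le> x" "x \<le> K" for x
    unfolding E_def using poho_deriv_ge[of x K \<epsilon>] close[of x] that s0 K by auto
  define f where "f x = poho x - poho_rate * x powr b / b + E * x" for x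
  have "f poho_start \<le> f x_half"
  proof (rule le_by_nonneg_deriv[where a = poho_start and b = x_half
        and f' = "\<lambda>x. poho_deriv x - poho_rate * x powr (b - 1) + E"])
    show "continuous_on {poho_start..x_half} f"
      unfolding f_def using s0 K b_pos
      by (intro continuous_intros poho_continuous_on continuous_on_powr_const_exponent) auto
    show "(f has_real_derivative poho_deriv x - poho_rate * x powr (b - 1) + E) (at x)"
      if "poho_start < x" "x < x_half" for x
      unfolding f_def[abs_def] using s0 K b_pos that
      by (intro DERIV_add DERIV_diff poho_has_deriv DERIV_powr_over_exponent derivative_eq_intros) auto
    show "0 \<le> poho_deriv x - poho_rate * x powr (b - 1) + E" if "poho_start < x" "x < x_half" for x
    proof -
      have "(1/2) powr (p + 1) \<le> w x powr (p + 1)"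
        using w_ge_half[of x] that s0 K p_pos by (intro powr_mono2) auto
      then have "poho_rate * x powr (b - 1) \<le> A0 * x powr (b - 1) * w x powr (p + 1)"
        using A0_pos by (simp add: poho_rate_def mult.commute mult.left_commute mult_left_mono)
      then show ?thesis using slope[of x] that K by auto
    qed
  qed (use s0 in auto)
  moreover have "poho x_half + E * x_half \<le> poho K + E * K"
  proof (rule le_by_nonneg_deriv[where f = "\<lambda>x. poho x + E * x" and a = x_half and b = K
        and f' = "\<lambda>x. poho_deriv x + E"])
    show "continuous_on {x_half..K} (\<lambda>x. poho x + E * x)"
      using K x_half_pos by (intro continuous_intros poho_continuous_on) auto
    show "((\<lambda>x. poho x + E * x) has_real_derivative poho_deriv x + E) (at x)" if "x_half < x" "x < K" for x
      using that K x_half_pos by (auto intro!: derivative_eq_intros poho_has_deriv)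
    show "0 \<le> poho_deriv x + E" if "x_half < x" "x < K" for x
      using slope[of x] that s0 A0_pos by (smt (verit) mult_nonneg_nonneg powr_ge_zero)
  qed (use K in auto)
  moreover have "- ((n - m) / m * (poho_start powr b / b)) \<le> poho poho_start"
    using poho_ge_neg[of poho_start] s0 K by simp
  moreover have "0 \<le> E * poho_start" using E s0 by simp
  ultimately show ?thesis
    using poho_start_small unfolding f_def E_def poho_gain_def by (simp add: algebra_simps)
qed

lemma y_le_Cy:
  assumes K: "1 \<le> K" "K < L" and \<tau>: "1 - t \<le> \<tau>" "\<tau> * K powr b \<le> 1"
  shows "y K \<le> 2 * Cy * K powr y_exp"
proof -
  have "(1 - t) * K powr b / b \<le> \<tau> * K powr b / b"
    using \<tau> b_pos by (intro divide_right_mono mult_right_mono) auto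
  also have "\<dots> \<le> 1 / b" using \<tau> b_pos by (intro divide_right_mono) auto
  finally have "y K \<le> 2 / b + Cw powr p / y_exp * K powr y_exp"
    using y_le_far[of K y_exp] K y_exp_pos y_exp_ge by simp
  also have "\<dots> \<le> 2 / b * K powr y_exp + 2 * (Cw powr p / y_exp) * K powr y_exp"
  proof -
    have "1 \<le> K powr y_exp" using K y_exp_pos by (intro ge_one_powr_ge_zero) auto
    then have "2 / b * 1 \<le> 2 / b * K powr y_exp" using b_pos by (intro mult_left_mono) auto
    moreover have "0 \<le> Cw powr p / y_exp * K powr y_exp" using y_exp_pos by simp
    ultimately show ?thesis by simp
  qed
  also have "\<dots> = 2 * Cy * K powr y_exp" by (simp add: Cy_def algebra_simps)
  finally show ?thesis .
qed

lemma source_prim_le: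
  assumes x: "0 < x" "x < L" and \<tau>: "1 - t \<le> \<tau>"
  shows "source_prim x \<le> Cw powr (p + 1) * x powr (- \<kappa> * (p + 1)) / (p + 1) + \<tau>"
proof -
  have w: "0 < w x" "w x \<le> 1" using w_range[of x] x by auto
  have "w x powr (p + 1) \<le> (Cw * x powr (- \<kappa>)) powr (p + 1)"
    using w_le_decay[OF x] w p_pos by (intro powr_mono2) auto
  also have "\<dots> = Cw powr (p + 1) * x powr (- \<kappa> * (p + 1))" by (simp add: powr_mult powr_powr)
  finally have "t * w x powr (p + 1) / (p + 1) \<le> Cw powr (p + 1) * x powr (- \<kappa> * (p + 1)) / (p + 1)"
    using t_pos t_le_1 p_pos mult_left_le_one_le[of "w x powr (p + 1)" t]
    by (intro divide_right_mono) auto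
  moreover have "(1 - t) * w x \<le> \<tau>" using mult_left_mono[of "w x" 1 "1 - t"] w t_le_1 \<tau> by simp
  ultimately show ?thesis unfolding source_prim_def by linarith
qed

lemma poho_le:
  assumes K: "1 \<le> K" "K < L" and \<tau>: "1 - t \<le> \<tau>" "\<tau> * K powr b \<le> 1"
  shows "poho K \<le> poho_upper K + \<tau> * K powr b"
proof -
  define Y where "Y = 2 * Cy * K powr y_exp"
  have y: "0 \<le> y K" "y K \<le> Y" using y_nonneg[of K] y_le_Cy[OF K \<tau>] K by (auto simp: Y_def)
  have "(m - 1) / m * K * u0 K * y K \<le> (m - 1) / m * K * (D0 * Y * K powr (1 - n)) powr inv_m1 * Y"
    unfolding u0_def using y m_gt_1 K D0_pos inv_m1_pos
    by (intro mult_mono mult_left_mono powr_mono2 mult_right_mono) auto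
  also have "\<dots> = (m - 1) / m * (D0 * 2 * Cy) powr inv_m1 * (2 * Cy) * K powr (- \<zeta>1)"
  proof -
    define a where "a = (y_exp + (1 - n)) * inv_m1"
    have "D0 * Y * K powr (1 - n) = (D0 * 2 * Cy) * K powr (y_exp + (1 - n))"
      by (simp add: Y_def powr_add)
    then have "(D0 * Y * K powr (1 - n)) powr inv_m1 = (D0 * 2 * Cy) powr inv_m1 * K powr a"
      unfolding a_def by (simp only: powr_mult[of "D0 * 2 * Cy"] powr_powr)
    moreover have "K * K powr a * K powr y_exp = K powr (1 + a + y_exp)"
      using K by (simp add: powr_add)
    moreover have "1 + a + y_exp = - \<zeta>1"
      using m_gt_1 by (simp add: a_def \<zeta>1_def inv_m1_def field_simps)
    ultimately show ?thesis by (simp add: Y_def mult_ac)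
  qed
  moreover have "K powr b * source_prim K \<le> Cw powr (p + 1) / (p + 1) * K powr (- \<zeta>2) + \<tau> * K powr b"
  proof -
    have "K powr b * K powr (- \<kappa> * (p + 1)) = K powr (- \<zeta>2)"
      by (simp add: \<zeta>2_def powr_add[symmetric])
    then have "K powr b * (Cw powr (p + 1) * K powr (- \<kappa> * (p + 1)) / (p + 1) + \<tau>)
        = Cw powr (p + 1) / (p + 1) * K powr (- \<zeta>2) + \<tau> * K powr b"
      by (simp add: distrib_left mult_ac)
    moreover have "K powr b * source_prim K
        \<le> K powr b * (Cw powr (p + 1) * K powr (- \<kappa> * (p + 1)) / (p + 1) + \<tau>)"
      using source_prim_le[of K \<tau>] K \<tau> by (intro mult_left_mono) auto
    ultimately show ?thesis by simp
  qed
  moreover have "0 \<le> (n - m) / m * w K * y K" using w_range[of K] y m_lt_n m_gt_1 K by auto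
  ultimately show ?thesis unfolding poho_def poho_upper_def by linarith
qed

end

text \<open>The two Pohozaev bounds at a large K, with t close to 1 and w \<ge> w_floor K on [0, K], are
  incompatible unless D deviates from D0 somewhere on [0, K].\<close>

lemma (in pohozaev_setting) long_scaled_solution_leaves_D0:
  obtains K \<eta> \<epsilon> L0 where "0 < K" "0 < \<eta>" "0 < \<epsilon>"
    and "\<And>t L w y u D. scaled_solution n m b p Dlo Dhi D0 t L w y u D \<Longrightarrow> L0 \<le> L \<Longrightarrow>
      \<exists>x. 0 < x \<and> x \<le> K \<and> \<eta> \<le> w x \<and> \<epsilon> < \<bar>(D x / D0) powr (1 / (m - 1)) - 1\<bar>"
proof -
  have "\<forall>\<^sub>F K in at_top. poho_upper K < poho_gain / 8 \<and> 1 + x_half \<le> K"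
    using poho_gain_pos
    by (intro eventually_conj eventually_ge_at_top order_tendstoD(2)[OF poho_upper_tendsto_0]) simp
  then obtain K where K_upper: "poho_upper K < poho_gain / 8" and K: "1 + x_half \<le> K"
    using eventually_happens[of _ at_top] by (auto simp: eventually_at_top_linorder)
  have K_pos: "0 < K" using K x_half_pos by simp
  define \<tau> where "\<tau> = min 1 (poho_gain / 8) / K powr b"
  have \<tau>: "0 < \<tau>" "\<tau> * K powr b \<le> 1" "\<tau> * K powr b \<le> poho_gain / 8"
    using poho_gain_pos K_pos by (auto simp: \<tau>_def)
  define \<epsilon> where "\<epsilon> = poho_gain / (4 * err_coeff K * K)"
  have \<epsilon>: "0 < \<epsilon>" "\<epsilon> * err_coeff K * K = poho_gain / 4"
    using poho_gain_pos err_coeff_pos[OF K_pos] K_pos by (auto simp: \<epsilon>_def)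
  show ?thesis
  proof (rule that[OF K_pos w_floor_pos[OF K_pos] \<epsilon>(1), of "2 * K + t_radius \<tau> + 1"])
    fix t L w y u D
    assume "scaled_solution n m b p Dlo Dhi D0 t L w y u D" and long: "2 * K + t_radius \<tau> + 1 \<le> L"
    then interpret scaled_solution n m b p Dlo Dhi D0 t L w y u D by simp
    have "0 \<le> t_radius \<tau>" by (simp add: t_radius_def)
    then have L: "2 * K < L" "t_radius \<tau> < L" "K < L" using long K_pos by auto
    show "\<exists>x. 0 < x \<and> x \<le> K \<and> w_floor K \<le> w x \<and> \<epsilon> < \<bar>(D x / D0) powr (1 / (m - 1)) - 1\<bar>"
    proof (rule ccontr)
      assume "\<not> ?thesis"
      then have "\<bar>(D x / D0) powr inv_m1 - 1\<bar> \<le> \<epsilon>" if "poho_start \<le> x" "x \<le> K" for x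
        using w_ge_floor[of K x] that K L poho_start_pos by (force simp: inv_m1_def)
      then have "3/4 * poho_gain - \<epsilon> * err_coeff K * K \<le> poho K"
        using poho_ge[of K \<epsilon>] K L \<epsilon> by simp
      moreover have "poho K \<le> poho_upper K + \<tau> * K powr b"
        using poho_le[of K \<tau>] t_close_to_1[OF \<tau>(1) L(2)] \<tau> K L x_half_pos by simp
      ultimately show False using \<epsilon> \<tau> K_upper poho_gain_pos by linarith
    qed
  qed
qed

section \<open>Rescaling a radial solution\<close>

lemma hfun_pos: "0 < hfun q p t"
  by (simp add: hfun_def)

locale radial_problem =
  fixes N :: nat and R m p \<gamma> \<alpha> \<beta> q c1 c2 k :: real and g a :: "real \<Rightarrow> real"
  assumes R_pos: "0 < R" and m_gt_1: "1 < m" and N_\<alpha>_gt_m: "m < real N + \<alpha>"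
    and \<beta>_\<alpha>: "0 < \<beta> - \<alpha> + 1" and p_gt: "m - 1 < p"
    and subcritical: "(p + 1) * (real N + \<alpha> - m) < m * (real N + \<beta>)"
    and \<gamma>_pos: "0 < \<gamma>" and c1_pos: "0 < c1" and c1_le_c2: "c1 \<le> c2"
    and a_cont: "continuous_on {0..} a" and a_bounds: "\<And>r. 0 \<le> r \<Longrightarrow> c1 \<le> a r \<and> a r \<le> c2"
    and g_nonneg: "\<And>s. 0 \<le> s \<Longrightarrow> 0 \<le> g s" and g_mono: "mono_on {0..} g"
    and k_nonneg: "0 \<le> k"
begin

lemma gtrunc_bounds: "0 \<le> s \<Longrightarrow> 0 \<le> gtrunc g k s \<and> gtrunc g k s \<le> g k"
  unfolding gtrunc_def using g_nonneg g_mono k_nonneg by (auto intro: mono_onD)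

lemma a_plus_g_pos: "0 \<le> r \<Longrightarrow> 0 < a r + g k"
  using a_bounds[of r] g_nonneg[OF k_nonneg] c1_pos by linarith

lemma scaling_setting:
  "pohozaev_setting (real N + \<alpha>) m (real N + \<beta>) p (c1 powr \<gamma>) ((c2 + g k) powr \<gamma>) ((a 0 + g k) powr \<gamma>)"
  using m_gt_1 N_\<alpha>_gt_m \<beta>_\<alpha> p_gt subcritical c1_pos c1_le_c2 \<gamma>_pos g_nonneg[OF k_nonneg] a_plus_g_pos[of 0]
  by unfold_locales (auto intro!: powr_mono2)

lemma weight_ratio_near_0:
  assumes "0 < \<epsilon>"
  obtains \<delta> where "0 < \<delta>"
    and "\<And>r. 0 \<le> r \<Longrightarrow> r < \<delta> \<Longrightarrow> \<bar>((a r + g k) powr \<gamma> / (a 0 + g k) powr \<gamma>) powr (1 / (m - 1)) - 1\<bar> \<le> \<epsilon>"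
proof -
  define \<phi> where "\<phi> r = ((a r + g k) powr \<gamma> / (a 0 + g k) powr \<gamma>) powr (1 / (m - 1))" for r
  have "continuous_on {0..} \<phi>"
    unfolding \<phi>_def using a_plus_g_pos
    by (intro continuous_intros a_cont) (auto simp: less_imp_neq[symmetric])
  moreover have "\<phi> 0 = 1" using a_plus_g_pos[of 0] by (simp add: \<phi>_def)
  ultimately obtain \<delta> where "0 < \<delta>" "\<And>r. r \<in> {0..} \<Longrightarrow> dist r 0 < \<delta> \<Longrightarrow> dist (\<phi> r) 1 < \<epsilon>"
    using assms unfolding continuous_on_iff by (metis atLeast_iff order_refl)
  then show ?thesis by (intro that[of \<delta>]) (auto simp: \<phi>_def dist_real_def less_imp_le)
qed

end

locale radial_solution = radial_problem +
  fixes \<xi> :: real and v vd F' :: "real \<Rightarrow> real"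
  assumes \<xi>_nonneg: "0 \<le> \<xi>"
    and v_pos: "\<And>r. 0 \<le> r \<Longrightarrow> r < R \<Longrightarrow> 0 < v r"
    and v_cont: "continuous_on {0..R} v" and v_R: "v R = 0"
    and v_deriv: "\<And>r. 0 \<le> r \<Longrightarrow> r < R \<Longrightarrow> (v has_real_derivative vd r) (at r within {0..<R})"
    and vd_cont: "continuous_on {0..<R} vd" and vd_0: "vd 0 = 0"
    and flux_deriv: "\<And>r. 0 < r \<Longrightarrow> r < R \<Longrightarrow>
      ((\<lambda>r. r powr (real N + \<alpha> - 1) * (\<bar>vd r\<bar> powr (m - 2) * vd r) / (a r + gtrunc g k (v r)) powr \<gamma>)
        has_real_derivative F' r) (at r)"
    and equation: "\<And>r. 0 < r \<Longrightarrow> r < R \<Longrightarrow>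
      - F' r = r powr (real N + \<beta> - 1) * (v r powr p + \<xi> / hfun q p (supnorm R v))"
begin

definition "weight r = (a r + gtrunc g k (v r)) powr \<gamma>"
definition "flux r = r powr (real N + \<alpha> - 1) * (\<bar>vd r\<bar> powr (m - 2) * vd r) / weight r"

lemma flux_has_deriv: "0 < r \<Longrightarrow> r < R \<Longrightarrow> (flux has_real_derivative F' r) (at r)"
  using flux_deriv unfolding flux_def[abs_def] weight_def by blast

lemma v_nonneg: "0 \<le> r \<Longrightarrow> r \<le> R \<Longrightarrow> 0 \<le> v r"
  using v_pos[of r] v_R by (cases "r = R") auto

lemma weight_bounds: "0 \<le> r \<Longrightarrow> r \<le> R \<Longrightarrow> c1 powr \<gamma> \<le> weight r \<and> weight r \<le> (c2 + g k) powr \<gamma>"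
  using a_bounds[of r] gtrunc_bounds[of "v r"] v_nonneg[of r] c1_pos \<gamma>_pos
  unfolding weight_def by (auto intro!: powr_mono2)

lemma weight_pos: "0 \<le> r \<Longrightarrow> r \<le> R \<Longrightarrow> 0 < weight r"
  using weight_bounds[of r] c1_pos by (smt (verit) powr_gt_zero)

lemma flux_continuous_on: "continuous_on {0..<R} flux"
  unfolding continuous_on_eq_continuous_within
proof
  fix r assume r: "r \<in> {0..<R}"
  show "continuous (at r within {0..<R}) flux"
  proof (cases "r = 0")
    case True
    \<comment> \<open>At the centre the flux vanishes because v'(0) = 0 and the coefficient is bounded below.\<close>
    have "(flux \<longlongrightarrow> 0) (at 0 within {0..<R})"
    proof (rule Lim_null_comparison)
      show "\<forall>\<^sub>F r in at 0 within {0..<R}.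
          norm (flux r) \<le> r powr (real N + \<alpha> - 1) * \<bar>vd r\<bar> powr (m - 1) / c1 powr \<gamma>"
        unfolding eventually_at_filter
      proof (intro always_eventually allI impI)
        fix r assume "r \<noteq> 0" "r \<in> {0..<R}"
        then show "norm (flux r) \<le> r powr (real N + \<alpha> - 1) * \<bar>vd r\<bar> powr (m - 1) / c1 powr \<gamma>"
          using weight_bounds[of r] weight_pos[of r] c1_pos abs_powr_diff_one_mult[of "vd r" "m - 1"]
          by (auto simp: flux_def abs_mult intro!: divide_left_mono)
      qed
      have "(vd \<longlongrightarrow> vd 0) (at 0 within {0..<R})"
        using vd_cont R_pos by (auto simp: continuous_on_def)
      then have "(vd \<longlongrightarrow> 0) (at 0 within {0..<R})" using vd_0 by simp
      then show "((\<lambda>r. r powr (real N + \<alpha> - 1) * \<bar>vd r\<bar> powr (m - 1) / c1 powr \<gamma>) \<longlongrightarrow> 0)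
          (at 0 within {0..<R})"
        using N_\<alpha>_gt_m m_gt_1 c1_pos by (auto intro!: tendsto_eq_intros simp: eventually_at_filter)
    qed
    then show ?thesis using True by (simp add: continuous_within flux_def)
  next
    case False
    then show ?thesis
      using r flux_has_deriv[of r] by (auto intro: continuous_at_imp_continuous_within DERIV_isCont)
  qed
qed

lemma flux_nonpos:
  assumes r: "0 \<le> r" "r < R"
  shows "flux r \<le> 0"
proof -
  have "(\<lambda>s. - flux s) 0 \<le> (\<lambda>s. - flux s) r"
  proof (rule le_by_nonneg_deriv[where a = 0 and b = r and f' = "\<lambda>s. - F' s"])
    show "continuous_on {0..r} (\<lambda>s. - flux s)"
      using r by (intro continuous_intros continuous_on_subset[OF flux_continuous_on]) auto
    show "((\<lambda>s. - flux s) has_real_derivative - F' s) (at s)" if "0 < s" "s < r" for s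
      using that r by (intro DERIV_minus flux_has_deriv) auto
    show "0 \<le> - F' s" if "0 < s" "s < r" for s
      using equation[of s] that r \<xi>_nonneg hfun_pos[of q p "supnorm R v"] by simp
  qed (use r in auto)
  moreover have "flux 0 = 0" by (simp add: flux_def)
  ultimately show ?thesis by simp
qed

lemma vd_nonpos:
  assumes r: "0 \<le> r" "r < R"
  shows "vd r \<le> 0"
proof (rule ccontr)
  assume "\<not> vd r \<le> 0"
  then have vd_pos: "0 < vd r" by simp
  then have "r \<noteq> 0" using vd_0 by auto
  then have "0 < flux r"
    unfolding flux_def using vd_pos weight_pos[of r] r by (intro divide_pos_pos mult_pos_pos) auto
  then show False using flux_nonpos[OF r] by simp
qed

lemma v_has_deriv:
  assumes "0 < r" "r < R"
  shows "(v has_real_derivative vd r) (at r)"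
proof -
  have "(v has_real_derivative vd r) (at r within {0<..<R})"
    using assms by (intro DERIV_subset[OF v_deriv]) auto
  moreover have "at r within {0<..<R} = at r"
    using assms by (intro at_within_open) auto
  ultimately show ?thesis by simp
qed

lemma v_le_v0:
  assumes r: "0 \<le> r" "r \<le> R"
  shows "v r \<le> v 0"
proof -
  have "(\<lambda>s. - v s) 0 \<le> (\<lambda>s. - v s) r"
  proof (rule le_by_nonneg_deriv[where a = 0 and b = r and f' = "\<lambda>s. - vd s"])
    show "continuous_on {0..r} (\<lambda>s. - v s)"
      using r by (intro continuous_intros continuous_on_subset[OF v_cont]) auto
    show "((\<lambda>s. - v s) has_real_derivative - vd s) (at s)" if "0 < s" "s < r" for s
      using that r by (intro DERIV_minus v_has_deriv) auto
    show "0 \<le> - vd s" if "0 < s" "s < r" for s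
      using vd_nonpos[of s] that r by simp
  qed (use r in simp)
  then show ?thesis by simp
qed

lemma v0_pos: "0 < v 0"
  using v_pos R_pos by simp

lemma supnorm_eq: "supnorm R v = v 0"
  unfolding supnorm_def
proof (rule cSup_eq_maximum)
  show "v 0 \<in> (\<lambda>r. \<bar>v r\<bar>) ` {0..R}"
    using v0_pos R_pos by (intro image_eqI[of _ _ 0]) auto
  show "x \<le> v 0" if x: "x \<in> (\<lambda>r. \<bar>v r\<bar>) ` {0..R}" for x
  proof -
    obtain r where "r \<in> {0..R}" "x = \<bar>v r\<bar>" using x by blast
    then show ?thesis using v_nonneg[of r] v_le_v0[of r] by simp
  qed
qed

text \<open>Blow-up rescaling at the maximum M = v(0); \<lambda> is chosen (lam_id) so that the rescaled
  source becomes t w^p + (1 - t).\<close>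

definition "M = v 0"
definition "rho = \<xi> / (hfun q p M * M powr p)"
definition "lam = (M powr (p - m + 1) * (1 + rho)) powr (-1 / (\<beta> - \<alpha> + m))"
definition "tM = 1 / (1 + rho)"
definition "LM = R / lam"
definition "wM x = v (lam * x) / M"
definition "yM x = - flux (lam * x) / (lam powr (real N + \<alpha> - m) * M powr (m - 1))"
definition "uM x = - (lam * vd (lam * x)) / M"
definition "DM x = weight (lam * x)"

lemma M_pos: "0 < M" using v0_pos by (simp add: M_def)
lemma rho_nonneg: "0 \<le> rho" using M_pos \<xi>_nonneg hfun_pos[of q p M] by (simp add: rho_def)
lemma lam_pos: "0 < lam" using M_pos rho_nonneg by (simp add: lam_def)

lemma lam_mult_mem: "0 \<le> x \<Longrightarrow> x < LM \<Longrightarrow> 0 \<le> lam * x \<and> lam * x < R"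
  using lam_pos by (auto simp: LM_def field_simps)

lemma lam_mult_image: "(\<lambda>x. lam * x) ` {0..<LM} \<subseteq> {0..<R}"
  using lam_mult_mem by force

lemma lam_id: "lam powr (\<beta> - \<alpha> + m) * (M powr (p - m + 1) * (1 + rho)) = 1"
proof -
  define X where "X = M powr (p - m + 1) * (1 + rho)"
  have "0 < X" using M_pos rho_nonneg by (simp add: X_def)
  moreover have "lam powr (\<beta> - \<alpha> + m) = X powr (-1)"
    using \<beta>_\<alpha> m_gt_1 by (simp add: lam_def X_def powr_powr)
  ultimately show ?thesis by (simp add: X_def[symmetric] powr_minus)
qed

lemma wM_has_deriv: "0 < x \<Longrightarrow> x < LM \<Longrightarrow> (wM has_real_derivative - uM x) (at x)"
proof -
  assume x: "0 < x" "x < LM"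
  then have "0 < lam * x" "lam * x < R" using lam_mult_mem[of x] lam_pos by auto
  then have "((\<lambda>x. v (lam * x)) has_real_derivative vd (lam * x) * lam) (at x)"
    using DERIV_chain2[OF v_has_deriv DERIV_cmult[OF DERIV_ident, of lam]] by simp
  then have "(wM has_real_derivative vd (lam * x) * lam / M) (at x)"
    unfolding wM_def[abs_def] by (rule DERIV_cdivide)
  then show ?thesis by (simp add: uM_def mult.commute)
qed

lemma lam_scaling:
  assumes "0 < x"
  shows "lam * (lam * x) powr (real N + \<beta> - 1) / (lam powr (real N + \<alpha> - m) * M powr (m - 1))
    = tM * x powr (real N + \<beta> - 1) / M powr p"
proof -
  have "lam * (lam * x) powr (real N + \<beta> - 1) = lam powr (real N + \<beta>) * x powr (real N + \<beta> - 1)"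
    using lam_pos by (simp add: powr_mult powr_mult_base)
  moreover have "lam powr (real N + \<beta>) = lam powr (\<beta> - \<alpha> + m) * lam powr (real N + \<alpha> - m)"
    by (simp add: powr_add[symmetric] add.commute)
  moreover have "M powr p = M powr (p - m + 1) * M powr (m - 1)"
    by (simp add: powr_add[symmetric])
  moreover have "tM = lam powr (\<beta> - \<alpha> + m) * M powr (p - m + 1)"
    using lam_id rho_nonneg by (simp add: tM_def field_simps)
  ultimately show ?thesis using lam_pos M_pos by simp
qed

lemma yM_has_deriv:
  assumes x: "0 < x" "x < LM"
  shows "(yM has_real_derivative x powr (real N + \<beta> - 1) * (tM * wM x powr p + (1 - tM))) (at x)"
proof -
  define c where "c = lam powr (real N + \<alpha> - m) * M powr (m - 1)"
  have r: "0 < lam * x" "lam * x < R" using lam_mult_mem[of x] lam_pos x by auto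
  have "((\<lambda>x. flux (lam * x)) has_real_derivative F' (lam * x) * lam) (at x)"
    using DERIV_chain2[OF flux_has_deriv[OF r] DERIV_cmult[OF DERIV_ident, of lam]] by simp
  then have "(yM has_real_derivative - (F' (lam * x) * lam) / c) (at x)"
    unfolding yM_def[abs_def] c_def[symmetric] by (intro DERIV_cdivide DERIV_minus)
  moreover have "- (F' (lam * x) * lam) / c = x powr (real N + \<beta> - 1) * (tM * wM x powr p + (1 - tM))"
  proof -
    have "- (F' (lam * x) * lam) / c = (- F' (lam * x)) * lam / c" by simp
    also have "\<dots> = lam * (lam * x) powr (real N + \<beta> - 1) / c * (v (lam * x) powr p + \<xi> / hfun q p (supnorm R v))"
      unfolding equation[OF r] by (simp add: mult_ac)
    also have "v (lam * x) powr p + \<xi> / hfun q p (supnorm R v) = M powr p * (wM x powr p + rho)"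
      using supnorm_eq M_pos hfun_pos[of q p M]
      by (simp add: wM_def rho_def M_def powr_mult[symmetric] field_simps)
    also have "lam * (lam * x) powr (real N + \<beta> - 1) / c = tM * x powr (real N + \<beta> - 1) / M powr p"
      unfolding c_def by (rule lam_scaling[OF x(1)])
    also have "tM * x powr (real N + \<beta> - 1) / M powr p * (M powr p * (wM x powr p + rho))
        = x powr (real N + \<beta> - 1) * (tM * wM x powr p + tM * rho)"
      using M_pos by (simp add: algebra_simps)
    also have "tM * rho = 1 - tM" using rho_nonneg by (simp add: tM_def field_simps)
    finally show ?thesis .
  qed
  ultimately show ?thesis by simp
qed

lemma uM_eq:
  assumes x: "0 < x" "x < LM"
  shows "uM x = (DM x * yM x * x powr (1 - (real N + \<alpha>))) powr (1 / (m - 1))"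
proof -
  define z where "z = vd (lam * x)"
  have r: "0 < lam * x" "lam * x < R" using lam_mult_mem[of x] lam_pos x by auto
  have z: "z \<le> 0" using vd_nonpos[of "lam * x"] r by (simp add: z_def)
  have D: "0 < DM x" using weight_pos[of "lam * x"] r by (simp add: DM_def)
  have uM: "uM x = lam * \<bar>z\<bar> / M" using z by (simp add: uM_def z_def)
  have "\<bar>z\<bar> powr (m - 2) * z = - (\<bar>z\<bar> powr (m - 1))"
    using abs_powr_diff_one_mult[of z "m - 1"] z by simp
  then have "flux (lam * x) = - ((lam * x) powr (real N + \<alpha> - 1) * \<bar>z\<bar> powr (m - 1) / DM x)"
    by (simp add: flux_def DM_def z_def)
  moreover have "x powr (real N + \<alpha> - 1) * x powr (1 - (real N + \<alpha>)) = 1"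
    using x by (simp add: powr_add[symmetric])
  moreover have "lam powr (real N + \<alpha> - 1) / lam powr (real N + \<alpha> - m) = lam powr (m - 1)"
    by (simp add: powr_diff[symmetric])
  moreover have "uM x powr (m - 1) = lam powr (m - 1) * \<bar>z\<bar> powr (m - 1) / M powr (m - 1)"
    unfolding uM by (simp add: powr_mult powr_divide)
  ultimately have "DM x * yM x * x powr (1 - (real N + \<alpha>)) = uM x powr (m - 1)"
    using D lam_pos M_pos by (simp add: yM_def powr_mult field_simps)
  then have "(DM x * yM x * x powr (1 - (real N + \<alpha>))) powr (1 / (m - 1))
      = uM x powr ((m - 1) * (1 / (m - 1)))"
    by (simp add: powr_powr)
  then show ?thesis using m_gt_1 uM lam_pos M_pos by simp
qed

lemma scaled_solution:
  "scaled_solution (real N + \<alpha>) m (real N + \<beta>) p (c1 powr \<gamma>) ((c2 + g k) powr \<gamma>) ((a 0 + g k) powr \<gamma>)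
    tM LM wM yM uM DM"
proof (intro scaled_solution.intro scaling_setting scaled_solution_axioms.intro)
  show "0 < tM" "tM \<le> 1" using rho_nonneg by (auto simp: tM_def)
  show "continuous_on {0..<LM} wM"
    unfolding wM_def using lam_mult_image M_pos
    by (intro continuous_intros continuous_on_compose2[OF v_cont]) auto
  show "wM 0 = 1" using M_pos by (simp add: wM_def M_def)
  show "0 < wM x \<and> wM x \<le> 1" if "0 \<le> x" "x < LM" for x
    using v_pos[of "lam * x"] v_le_v0[of "lam * x"] lam_mult_mem[OF that] M_pos by (simp add: wM_def M_def)
  show "continuous_on {0..<LM} yM"
    unfolding yM_def using lam_mult_image lam_pos M_pos
    by (intro continuous_intros continuous_on_compose2[OF flux_continuous_on]) auto
  show "yM 0 = 0" by (simp add: yM_def flux_def)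
  show "c1 powr \<gamma> \<le> DM x \<and> DM x \<le> (c2 + g k) powr \<gamma>" if "0 < x" "x < LM" for x
    using weight_bounds[of "lam * x"] lam_mult_mem[of x] that by (simp add: DM_def)
qed (use wM_has_deriv yM_has_deriv uM_eq in auto)

lemma lam_mult_M_le_1: "lam * M powr ((p - m + 1) / (\<beta> - \<alpha> + m)) \<le> 1"
proof -
  define E where "E = (p - m + 1) / (\<beta> - \<alpha> + m)"
  have "lam \<le> (M powr (p - m + 1)) powr (-1 / (\<beta> - \<alpha> + m))"
    unfolding lam_def using M_pos rho_nonneg \<beta>_\<alpha> m_gt_1
    by (intro powr_mono2') (auto simp: mult_le_cancel_left1)
  also have "\<dots> = M powr (- E)" by (simp add: powr_powr E_def)
  finally have "lam * M powr E \<le> M powr (- E) * M powr E" by (rule mult_right_mono) simp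
  also have "\<dots> = 1" using M_pos by (simp add: powr_add[symmetric])
  finally show ?thesis by (simp add: E_def)
qed

lemma lam_mult_lt_1:
  assumes "0 < X" "X powr ((\<beta> - \<alpha> + m) / (p - m + 1)) < M"
  shows "lam * X < 1"
proof -
  have "X < M powr ((p - m + 1) / (\<beta> - \<alpha> + m))"
    using powr_less_mono2[of "(p - m + 1) / (\<beta> - \<alpha> + m)", OF _ _ assms(2)] assms(1) \<beta>_\<alpha> m_gt_1 p_gt
    by (simp add: powr_powr)
  then have "lam * X < lam * M powr ((p - m + 1) / (\<beta> - \<alpha> + m))" using lam_pos by simp
  also have "\<dots> \<le> 1" by (rule lam_mult_M_le_1)
  finally show ?thesis .
qed

lemma supnorm_le:
  assumes long: "\<And>t L w y u D. scaled_solution (real N + \<alpha>) m (real N + \<beta>) p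
      (c1 powr \<gamma>) ((c2 + g k) powr \<gamma>) ((a 0 + g k) powr \<gamma>) t L w y u D \<Longrightarrow> Lmin \<le> L \<Longrightarrow>
      \<exists>x. 0 < x \<and> x \<le> K \<and> \<eta> \<le> w x \<and> \<epsilon> < \<bar>(D x / (a 0 + g k) powr \<gamma>) powr (1 / (m - 1)) - 1\<bar>"
    and K: "0 < K" and \<eta>: "0 < \<eta>" and \<delta>: "0 < \<delta>"
    and a_near_0: "\<And>r. 0 \<le> r \<Longrightarrow> r < \<delta> \<Longrightarrow>
      \<bar>((a r + g k) powr \<gamma> / (a 0 + g k) powr \<gamma>) powr (1 / (m - 1)) - 1\<bar> \<le> \<epsilon>"
  shows "supnorm R v \<le> max (k / \<eta>)
    (max ((Lmin / R) powr ((\<beta> - \<alpha> + m) / (p - m + 1))) ((K / \<delta>) powr ((\<beta> - \<alpha> + m) / (p - m + 1))))"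
proof (rule ccontr)
  assume "\<not> ?thesis"
  then have M_big: "k / \<eta> < M" "(Lmin / R) powr ((\<beta> - \<alpha> + m) / (p - m + 1)) < M"
    "(K / \<delta>) powr ((\<beta> - \<alpha> + m) / (p - m + 1)) < M"
    using supnorm_eq by (auto simp: M_def)
  have "Lmin \<le> LM"
  proof (cases "Lmin \<le> 0")
    case False
    then have "lam * (Lmin / R) < 1" using lam_mult_lt_1[of "Lmin / R"] M_big(2) R_pos by simp
    then show ?thesis using lam_pos R_pos by (simp add: LM_def field_simps)
  qed (use lam_pos R_pos in \<open>auto simp: LM_def intro: order_trans[of _ 0]\<close>)
  then obtain x where x: "0 < x" "x \<le> K" "\<eta> \<le> wM x"
    and far: "\<epsilon> < \<bar>(DM x / (a 0 + g k) powr \<gamma>) powr (1 / (m - 1)) - 1\<bar>"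
    using long[OF scaled_solution] by blast
  have "lam * (K / \<delta>) < 1" using lam_mult_lt_1[of "K / \<delta>"] M_big(3) K \<delta> by simp
  then have "lam * K < \<delta>" using \<delta> by (simp add: field_simps)
  then have "lam * x < \<delta>" using x lam_pos mult_left_mono[of x K lam] by linarith
  moreover have "k < v (lam * x)"
  proof -
    have "k < M * \<eta>" using M_big(1) \<eta> by (simp add: field_simps)
    also have "\<dots> \<le> M * wM x" using x M_pos by (intro mult_left_mono) auto
    finally show ?thesis using M_pos by (simp add: wM_def)
  qed
  then have "DM x = (a (lam * x) + g k) powr \<gamma>"
    by (simp add: DM_def weight_def gtrunc_def min_def)
  ultimately show False using a_near_0[of "lam * x"] far x lam_pos by simp
qed

end

lemma (in radial_problem) positive_solution_radial_solution:
  assumes "0 \<le> \<xi>" and "positive_solution N R m p \<gamma> \<alpha> \<beta> q a g k \<xi> v"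
  obtains vd F' where "radial_solution N R m p \<gamma> \<alpha> \<beta> q c1 c2 k g a \<xi> v vd F'"
proof -
  obtain vd F' where "\<forall>r\<in>{0..<R}. (v has_real_derivative vd r) (at r within {0..<R})"
    and "continuous_on {0..<R} vd" and "vd 0 = 0"
    and "\<forall>r\<in>{0<..<R}. ((\<lambda>r. r powr (real N + \<alpha> - 1) * (\<bar>vd r\<bar> powr (m - 2) * vd r)
          / (a r + gtrunc g k (v r)) powr \<gamma>) has_real_derivative F' r) (at r)"
    and "\<forall>r\<in>{0<..<R}. - F' r = r powr (real N + \<beta> - 1) * (v r powr p + \<xi> / hfun q p (supnorm R v))"
    using assms(2) unfolding positive_solution_def Let_def by blast
  then show ?thesis
    using assms unfolding positive_solution_def
    by (intro that[of vd F'] radial_solution.intro radial_problem_axioms radial_solution_axioms.intro) auto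
qed

lemma (in radial_problem) supnorm_bounded:
  obtains C where "0 < C"
    and "\<And>\<xi> v. 0 \<le> \<xi> \<Longrightarrow> positive_solution N R m p \<gamma> \<alpha> \<beta> q a g k \<xi> v \<Longrightarrow> supnorm R v \<le> C"
proof -
  interpret pohozaev_setting "real N + \<alpha>" m "real N + \<beta>" p "c1 powr \<gamma>" "(c2 + g k) powr \<gamma>"
    "(a 0 + g k) powr \<gamma>"
    by (rule scaling_setting)
  obtain K \<eta> \<epsilon> L0 where K: "0 < K" "0 < \<eta>" "0 < \<epsilon>"
    and long: "\<And>t L w y u D. scaled_solution (real N + \<alpha>) m (real N + \<beta>) p (c1 powr \<gamma>)
        ((c2 + g k) powr \<gamma>) ((a 0 + g k) powr \<gamma>) t L w y u D \<Longrightarrow> L0 \<le> L \<Longrightarrow>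
      \<exists>x. 0 < x \<and> x \<le> K \<and> \<eta> \<le> w x \<and> \<epsilon> < \<bar>(D x / (a 0 + g k) powr \<gamma>) powr (1 / (m - 1)) - 1\<bar>"
    using long_scaled_solution_leaves_D0 by blast
  obtain \<delta> where \<delta>: "0 < \<delta>" and a_near_0: "\<And>r. 0 \<le> r \<Longrightarrow> r < \<delta> \<Longrightarrow>
      \<bar>((a r + g k) powr \<gamma> / (a 0 + g k) powr \<gamma>) powr (1 / (m - 1)) - 1\<bar> \<le> \<epsilon>"
    using weight_ratio_near_0[OF K(3)] by blast
  define e where "e = (\<beta> - \<alpha> + m) / (p - m + 1)"
  show ?thesis
  proof (rule that[of "max 1 (max (k / \<eta>) (max ((L0 / R) powr e) ((K / \<delta>) powr e)))"])
    fix \<xi> v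
    assume "0 \<le> \<xi>" "positive_solution N R m p \<gamma> \<alpha> \<beta> q a g k \<xi> v"
    then obtain vd F' where "radial_solution N R m p \<gamma> \<alpha> \<beta> q c1 c2 k g a \<xi> v vd F'"
      by (rule positive_solution_radial_solution)
    then have "supnorm R v \<le> max (k / \<eta>) (max ((L0 / R) powr e) ((K / \<delta>) powr e))"
      unfolding e_def by (rule radial_solution.supnorm_le) (fact long K(1,2) \<delta> a_near_0)+
    then show "supnorm R v \<le> max 1 (max (k / \<eta>) (max ((L0 / R) powr e) ((K / \<delta>) powr e)))" by simp
  qed simp
qed

theorem theorem5p1:
  fixes N :: nat and R m p \<gamma> \<alpha> \<beta> q c1 c2 :: real
    and g a :: "real \<Rightarrow> real"
  assumes "N \<ge> 1" and "R > 0" and "m > 1" and "real N > m" and "p > 1"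
    and "0 < \<gamma>" and "\<gamma> < m - 1"
    and "real N + \<alpha> - m > 0" and "\<beta> - \<alpha> + 1 > 0"
    and "m - 1 < p" and "p < m * (real N + \<beta>) / (real N + \<alpha> - m) - 1"
    and "continuous_on {0..} g" and "\<forall>s\<ge>0. g s \<ge> 0" and "mono_on {0..} g"
    and "((\<lambda>s. g s / s) \<longlongrightarrow> 1) at_top"
    and "continuous_on {0..} a" and "0 < c1" and "c1 \<le> c2"
    and "\<forall>t\<ge>0. c1 \<le> a t \<and> a t \<le> c2"
    and "q > p"
  shows "\<forall>k::nat. k \<ge> 1 \<longrightarrow> (\<exists>C>0. \<forall>\<xi>\<ge>0. \<forall>v.
           positive_solution N R m p \<gamma> \<alpha> \<beta> q a g (real k) \<xi> v \<longrightarrow> supnorm R v \<le> C)"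
proof (intro allI impI)
  fix k :: nat
  have "p + 1 < m * (real N + \<beta>) / (real N + \<alpha> - m)" using assms(11) by simp
  then have "(p + 1) * (real N + \<alpha> - m) < m * (real N + \<beta>)"
    using assms(8) by (simp add: pos_less_divide_eq)
  \<comment> \<open>For fixed k the coefficient a + g_k(v) stays in [c1, c2 + g k].\<close>
  then interpret radial_problem N R m p \<gamma> \<alpha> \<beta> q c1 c2 "real k" g a
    using assms by unfold_locales auto
  obtain C where "0 < C"
    and "\<And>\<xi> v. 0 \<le> \<xi> \<Longrightarrow> positive_solution N R m p \<gamma> \<alpha> \<beta> q a g k \<xi> v \<Longrightarrow> supnorm R v \<le> C"
    using supnorm_bounded by blast
  then show "\<exists>C>0. \<forall>\<xi>\<ge>0. \<forall>v. positive_solution N R m p \<gamma> \<alpha> \<beta> q a g (real k) \<xi> v \<longrightarrow> supnorm R v \<le> C"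
    by blast
qed

end
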